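(* Let $\mathbb{I}=\{\mathbb{I}_1,\dots,\mathbb{I}_N\}$ be a random iterated function system on a compact metric space $(K,d)$. Then for all $\omega\in\Omega$, $\dim_{\mathrm P}F_\omega=\overline{\dim}_{\mathrm B}F_\omega$.
   Context: A random iterated function system on $(K,d)$ is a finite set $\mathbb{I}=\{\mathbb{I}_1,\dots,\mathbb{I}_N\}$ with $\mathbb{I}_i=\{S_{i,j}\}_{j\in\mathcal{I}_i}$, $\mathcal{I}_i$ finite nonempty, each $S_{i,j}:K\to K$ a bi-Lipschitz contraction ($0<\inf_{x\ne y}\frac{d(S_{i,j}x,S_{i,j}y)}{d(x,y)}$ and $\sup_{x\ne y}\frac{d(S_{i,j}x,S_{i,j}y)}{d(x,y)}<1$). $\Omega=\{1,\dots,N\}^{\mathbb{N}}$ and $F_\omega=\bigcap_k\bigcup_{i_1\in\mathcal{I}_{\omega_1},\dots,i_k\in\mathcal{I}_{\omega_k}}S_{\omega_1,i_1}\circ\cdots\circ S_{\omega_k,i_k}(K)$. $\dim_{\mathrm P}$ is packing dimension and $\overline{\dim}_{\mathrm B}$ upper box dimension. *)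

theory Defs
  imports "HOL-Analysis.Analysis" "HOL-Library.Liminf_Limsup"
begin

definition bilip_contraction :: "'a::metric_space set \<Rightarrow> ('a \<Rightarrow> 'a) \<Rightarrow> bool" where
  "bilip_contraction K f \<longleftrightarrow>
     (\<exists>c>0. \<exists>r<1. \<forall>x\<in>K. \<forall>y\<in>K. x \<noteq> y \<longrightarrow>
        c \<le> dist (f x) (f y) / dist x y \<and> dist (f x) (f y) / dist x y \<le> r)"

text \<open>The system: indices i in {1..N}, the i-th IFS consists of maps S i j, j in J i.\<close>
definition rifs :: "'a::metric_space set \<Rightarrow> nat \<Rightarrow> (nat \<Rightarrow> nat set) \<Rightarrow> (nat \<Rightarrow> nat \<Rightarrow> 'a \<Rightarrow> 'a) \<Rightarrow> bool" where
  "rifs K N J S \<longleftrightarrow> compact K \<and> K \<noteq> {} \<and> N \<ge> 1 \<and>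
     (\<forall>i\<in>{1..N}. finite (J i) \<and> J i \<noteq> {} \<and>
        (\<forall>j\<in>J i. S i j ` K \<subseteq> K \<and> bilip_contraction K (S i j)))"

fun compw :: "(nat \<Rightarrow> nat \<Rightarrow> 'a \<Rightarrow> 'a) \<Rightarrow> (nat \<Rightarrow> nat) \<Rightarrow> nat \<Rightarrow> nat list \<Rightarrow> 'a \<Rightarrow> 'a" where
  "compw S w m [] = id"
| "compw S w m (u # us) = S (w m) u \<circ> compw S w (Suc m) us"

text \<open>The random attractor F_omega (omega_1 is w 0, omega_2 is w 1, ...).\<close>
definition rattractor :: "'a set \<Rightarrow> (nat \<Rightarrow> nat set) \<Rightarrow> (nat \<Rightarrow> nat \<Rightarrow> 'a \<Rightarrow> 'a) \<Rightarrow> (nat \<Rightarrow> nat) \<Rightarrow> 'a set" where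
  "rattractor K J S w =
     (\<Inter>k. \<Union>{compw S w 0 us ` K | us. length us = k \<and> (\<forall>m<k. us ! m \<in> J (w m))})"

definition finite_delta_cover :: "'a::metric_space set \<Rightarrow> real \<Rightarrow> 'a set set \<Rightarrow> bool" where
  "finite_delta_cover F \<delta> C \<longleftrightarrow> finite C \<and> F \<subseteq> \<Union>C \<and> (\<forall>A\<in>C. bounded A \<and> diameter A \<le> \<delta>)"

definition cover_num :: "'a::metric_space set \<Rightarrow> real \<Rightarrow> nat" where
  "cover_num F \<delta> = (LEAST n. \<exists>C. finite_delta_cover F \<delta> C \<and> card C = n)"

definition upper_box_dim :: "'a::metric_space set \<Rightarrow> ereal" where
  "upper_box_dim F =
     (if \<forall>\<delta>>0. \<exists>C. finite_delta_cover F \<delta> C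
      then Limsup (at_right 0) (\<lambda>\<delta>. ereal (ln (real (cover_num F \<delta>)) / - ln \<delta>))
      else \<infinity>)"

text \<open>delta-packings of F: finitely many disjoint balls with centres in F and radii at most delta
  (a countable packing sum is the supremum of its finite partial sums).\<close>
definition packing_pre_delta :: "real \<Rightarrow> real \<Rightarrow> 'a::metric_space set \<Rightarrow> ennreal" where
  "packing_pre_delta s \<delta> F =
     (SUP P \<in> {P. finite P \<and> (\<forall>(x,r)\<in>P. x \<in> F \<and> 0 < r \<and> r \<le> \<delta>) \<and>
                  disjoint_family_on (\<lambda>(x,r). ball x r) P}.
        \<Sum>(x,r)\<in>P. ennreal ((2 * r) powr s))"

definition packing_premeasure :: "real \<Rightarrow> 'a::metric_space set \<Rightarrow> ennreal" where
  "packing_premeasure s F = (INF \<delta>\<in>{0<..}. packing_pre_delta s \<delta> F)"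

definition packing_measure :: "real \<Rightarrow> 'a::metric_space set \<Rightarrow> ennreal" where
  "packing_measure s F =
     (INF E \<in> {E :: nat \<Rightarrow> 'a set. F \<subseteq> (\<Union>i. E i)}. \<Sum>i. packing_premeasure s (E i))"

definition packing_dim :: "'a::metric_space set \<Rightarrow> ereal" where
  "packing_dim F = Inf {ereal s | s. 0 \<le> s \<and> packing_measure s F = 0}"

end

theory Submission
  imports Defs
begin

text \<open>
  Packing dimension never exceeds upper box dimension: if N_\<rho>(F) \<le> \<rho>^-t for small \<rho> and
  t < s, sorting the balls of a \<delta>-packing into dyadic radius classes bounds its s-sum by
  \<delta>^(s-t) times a geometric series, so the packing premeasure of F vanishes.

  For the converse, assume the s-dimensional packing measure of F_\<omega> is zero, so F_\<omega> is covered
  by sets E_i of packing premeasure below 1. By Baire's theorem some E_i is dense in a relatively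
  open part of F_\<omega>, and that part contains a cylinder g(F_(\<sigma>^k \<omega>)), where g is a composition of
  k of the maps and has lower Lipschitz constant c^k. A maximal separated subset of the cylinder,
  pushed into E_i, is a packing of E_i, whence N_\<rho>(g(F_(\<sigma>^k \<omega>))) \<lesssim> \<rho>^-s. Since F_\<omega> is the
  union of finitely many contracted copies of F_(\<sigma>^k \<omega>), also N_\<rho>(F_\<omega>) \<lesssim> \<rho>^-s, i.e. the upper
  box dimension of F_\<omega> is at most s.
\<close>

section \<open>Covering numbers\<close>

lemma diameter_le_dist:
  fixes A :: "'a::metric_space set"
  assumes "0 \<le> d" "\<And>x y. x \<in> A \<Longrightarrow> y \<in> A \<Longrightarrow> dist x y \<le> d"
  shows "diameter A \<le> d"
  using assms unfolding diameter_def by (auto intro!: cSUP_least)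

lemma bounded_if_dist_le:
  fixes B :: "'a::metric_space set"
  assumes "\<And>x y. x \<in> B \<Longrightarrow> y \<in> B \<Longrightarrow> dist x y \<le> d"
  shows "bounded B"
proof (cases "B = {}")
  case False
  then obtain a where "a \<in> B" by auto
  then show ?thesis using assms bounded_any_center[of B a] by blast
qed simp

lemma diameter_cball_le:
  fixes x :: "'a::metric_space"
  assumes "0 \<le> a"
  shows "diameter (cball x a) \<le> 2 * a"
proof (rule diameter_le_dist)
  fix u v assume "u \<in> cball x a" "v \<in> cball x a"
  then show "dist u v \<le> 2 * a" using dist_triangle[of u v x] by (auto simp: dist_commute)
qed (use assms in simp)

lemma continuous_on_if_dist_le:
  fixes f :: "'a::metric_space \<Rightarrow> 'b::metric_space"
  assumes "\<And>x y. x \<in> K \<Longrightarrow> y \<in> K \<Longrightarrow> dist (f x) (f y) \<le> dist x y"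
  shows "continuous_on K f"
  unfolding continuous_on_iff
proof (intro ballI allI impI)
  fix x e assume "x \<in> K" "(0::real) < e"
  then show "\<exists>d>0. \<forall>x'\<in>K. dist x' x < d \<longrightarrow> dist (f x') (f x) < e"
    using assms by (intro exI[of _ e]) (auto intro: le_less_trans)
qed

lemma finite_delta_cover_nonneg:
  assumes "finite_delta_cover X d C" "A \<in> C"
  shows "0 \<le> d"
  using assms diameter_ge_0[of A] unfolding finite_delta_cover_def by force

lemma dist_le_if_finite_delta_cover:
  assumes "finite_delta_cover X d C" "A \<in> C" "x \<in> A" "y \<in> A"
  shows "dist x y \<le> d"
  using assms diameter_bounded_bound[of A x y] unfolding finite_delta_cover_def by force

lemma cover_num_le_card: "finite_delta_cover X d C \<Longrightarrow> cover_num X d \<le> card C"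
  unfolding cover_num_def by (rule Least_le) blast

lemma cover_num_attained:
  assumes "\<exists>C. finite_delta_cover X d C"
  shows "\<exists>C. finite_delta_cover X d C \<and> card C = cover_num X d"
proof -
  have "\<exists>n. \<exists>C. finite_delta_cover X d C \<and> card C = n" using assms by blast
  from LeastI_ex[OF this] show ?thesis unfolding cover_num_def .
qed

lemma finite_delta_cover_compact:
  fixes X :: "'a::metric_space set"
  assumes "compact X" "0 < d"
  shows "\<exists>C. finite_delta_cover X d C"
proof -
  have "d/2 > 0" using assms(2) by simp
  then obtain k where k: "finite k" "X \<subseteq> \<Union>((\<lambda>x. ball x (d/2)) ` k)"
    using assms(1) unfolding compact_eq_totally_bounded by metis
  have "X \<subseteq> \<Union>((\<lambda>x. cball x (d/2)) ` k)"
    using k(2) by (force simp: subset_iff)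
  moreover have "bounded (cball x (d/2)) \<and> diameter (cball x (d/2)) \<le> d" for x
    using diameter_cball_le[of "d/2" x] assms(2) by simp
  ultimately have "finite_delta_cover X d ((\<lambda>x. cball x (d/2)) ` k)"
    using k(1) unfolding finite_delta_cover_def by blast
  then show ?thesis ..
qed

lemma cover_num_ge_1:
  assumes "X \<noteq> {}" "\<exists>C. finite_delta_cover X d C"
  shows "1 \<le> cover_num X d"
proof -
  obtain C where C: "finite_delta_cover X d C" "card C = cover_num X d"
    using cover_num_attained[OF assms(2)] by blast
  then have "C \<noteq> {}" "finite C" using assms(1) unfolding finite_delta_cover_def by auto
  then show ?thesis using C(2) by (metis One_nat_def Suc_leI card_gt_0_iff)
qed

lemma cover_num_image_nonexpansive:
  fixes g :: "'a::metric_space \<Rightarrow> 'b::metric_space"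
  assumes "X \<subseteq> K" "\<And>x y. x \<in> K \<Longrightarrow> y \<in> K \<Longrightarrow> dist (g x) (g y) \<le> dist x y"
    "\<exists>C. finite_delta_cover X d C"
  shows "cover_num (g ` X) d \<le> cover_num X d" "\<exists>C. finite_delta_cover (g ` X) d C"
proof -
  obtain C where C: "finite_delta_cover X d C" "card C = cover_num X d"
    using cover_num_attained[OF assms(3)] by blast
  have "finite_delta_cover (g ` X) d ((\<lambda>A. g ` (A \<inter> K)) ` C)"
    unfolding finite_delta_cover_def
  proof (intro conjI ballI)
    show "finite ((\<lambda>A. g ` (A \<inter> K)) ` C)" "g ` X \<subseteq> \<Union> ((\<lambda>A. g ` (A \<inter> K)) ` C)"
      using C assms(1) unfolding finite_delta_cover_def by blast+
    fix B assume "B \<in> (\<lambda>A. g ` (A \<inter> K)) ` C"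
    then obtain A where A: "A \<in> C" "B = g ` (A \<inter> K)" by auto
    have dist_le: "dist x y \<le> d" if xy: "x \<in> B" "y \<in> B" for x y
    proof -
      obtain x' y' where "x' \<in> A \<inter> K" "y' \<in> A \<inter> K" "x = g x'" "y = g y'"
        using xy A by auto
      then show ?thesis
        using assms(2) dist_le_if_finite_delta_cover[OF C(1) A(1)] by (meson IntD1 IntD2 order_trans)
    qed
    show "bounded B" using bounded_if_dist_le dist_le by blast
    show "diameter B \<le> d"
      using diameter_le_dist[OF finite_delta_cover_nonneg[OF C(1) A(1)]] dist_le by blast
  qed
  moreover have "card ((\<lambda>A. g ` (A \<inter> K)) ` C) \<le> card C"
    using C(1) card_image_le unfolding finite_delta_cover_def by blast
  ultimately show "cover_num (g ` X) d \<le> cover_num X d" "\<exists>C. finite_delta_cover (g ` X) d C"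
    using C(2) cover_num_le_card[of "g ` X" d] by (metis order_trans)+
qed

lemma cover_num_le_image:
  fixes g :: "'a::metric_space \<Rightarrow> 'b::metric_space"
  assumes "X \<subseteq> K" "c > 0" "\<And>x y. x \<in> K \<Longrightarrow> y \<in> K \<Longrightarrow> c * dist x y \<le> dist (g x) (g y)"
    "\<exists>C. finite_delta_cover (g ` X) d C"
  shows "cover_num X (d / c) \<le> cover_num (g ` X) d"
proof -
  obtain C where C: "finite_delta_cover (g ` X) d C" "card C = cover_num (g ` X) d"
    using cover_num_attained[OF assms(4)] by blast
  have "finite_delta_cover X (d/c) ((\<lambda>A. X \<inter> g -` A) ` C)"
    unfolding finite_delta_cover_def
  proof (intro conjI ballI)
    show "finite ((\<lambda>A. X \<inter> g -` A) ` C)" "X \<subseteq> \<Union> ((\<lambda>A. X \<inter> g -` A) ` C)"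
      using C unfolding finite_delta_cover_def by blast+
    fix B assume "B \<in> (\<lambda>A. X \<inter> g -` A) ` C"
    then obtain A where A: "A \<in> C" "B = X \<inter> g -` A" by auto
    have dist_le: "dist x y \<le> d / c" if "x \<in> B" "y \<in> B" for x y
    proof -
      have "c * dist x y \<le> dist (g x) (g y)" using that A assms(1,3) by blast
      also have "\<dots> \<le> d" using that A dist_le_if_finite_delta_cover[OF C(1)] by blast
      finally show ?thesis using assms(2) by (simp add: field_simps)
    qed
    show "bounded B" using bounded_if_dist_le dist_le by blast
    show "diameter B \<le> d / c"
      by (rule diameter_le_dist) (use dist_le finite_delta_cover_nonneg[OF C(1) A(1)] assms(2) in auto)
  qed
  moreover have "card ((\<lambda>A. X \<inter> g -` A) ` C) \<le> card C"
    using C(1) card_image_le unfolding finite_delta_cover_def by blast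
  ultimately show ?thesis using C(2) cover_num_le_card[of X "d/c"] by (metis order_trans)
qed

lemma cover_num_UN_le:
  fixes X :: "'a::metric_space set"
  assumes "finite I" "X \<subseteq> (\<Union>i\<in>I. Y i)" "\<And>i. i \<in> I \<Longrightarrow> \<exists>C. finite_delta_cover (Y i) d C"
  shows "cover_num X d \<le> (\<Sum>i\<in>I. cover_num (Y i) d)"
proof -
  have "\<forall>i\<in>I. \<exists>C. finite_delta_cover (Y i) d C \<and> card C = cover_num (Y i) d"
    using assms(3) cover_num_attained by blast
  then obtain CC where CC: "\<And>i. i \<in> I \<Longrightarrow> finite_delta_cover (Y i) d (CC i) \<and> card (CC i) = cover_num (Y i) d"
    by metis
  have "finite_delta_cover X d (\<Union>i\<in>I. CC i)"
    unfolding finite_delta_cover_def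
  proof (intro conjI ballI)
    show "finite (\<Union>i\<in>I. CC i)" using CC assms(1) unfolding finite_delta_cover_def by auto
    show "X \<subseteq> \<Union> (\<Union>i\<in>I. CC i)"
    proof
      fix x assume "x \<in> X"
      then obtain i where i: "i \<in> I" "x \<in> Y i" using assms(2) by auto
      then have "x \<in> \<Union>(CC i)" using CC[OF i(1)] unfolding finite_delta_cover_def by auto
      then show "x \<in> \<Union> (\<Union>i\<in>I. CC i)" using i by auto
    qed
    fix A assume "A \<in> (\<Union>i\<in>I. CC i)"
    then show "bounded A" "diameter A \<le> d" using CC unfolding finite_delta_cover_def by auto
  qed
  then have "cover_num X d \<le> card (\<Union>i\<in>I. CC i)" by (rule cover_num_le_card)
  also have "\<dots> \<le> (\<Sum>i\<in>I. card (CC i))" by (rule card_UN_le[OF assms(1)])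
  also have "\<dots> = (\<Sum>i\<in>I. cover_num (Y i) d)" using CC by simp
  finally show ?thesis .
qed

lemma card_separated_le_cover:
  fixes X :: "'a::metric_space set"
  assumes "finite_delta_cover X d C" "Y \<subseteq> X"
    "\<And>x y. x \<in> Y \<Longrightarrow> y \<in> Y \<Longrightarrow> x \<noteq> y \<Longrightarrow> d < dist x y"
  shows "finite Y" "card Y \<le> card C"
proof -
  have "\<forall>y\<in>Y. \<exists>A\<in>C. y \<in> A" using assms(1,2) unfolding finite_delta_cover_def by blast
  then obtain f where f: "\<And>y. y \<in> Y \<Longrightarrow> f y \<in> C \<and> y \<in> f y" by metis
  have "inj_on f Y"
  proof (rule inj_onI, rule ccontr)
    fix x y assume xy: "x \<in> Y" "y \<in> Y" "f x = f y" "x \<noteq> y"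
    then have "f x \<in> C" "x \<in> f x" "y \<in> f x" using f by metis+
    then have "dist x y \<le> d" by (rule dist_le_if_finite_delta_cover[OF assms(1)])
    then show False using assms(3)[OF xy(1,2,4)] by simp
  qed
  moreover have "f ` Y \<subseteq> C" using f by auto
  moreover have "finite C" using assms(1) unfolding finite_delta_cover_def by auto
  ultimately show "finite Y" "card Y \<le> card C"
    by (auto intro: inj_on_finite card_inj_on_le)
qed

lemma maximal_separated_subset:
  fixes X :: "'a::metric_space set"
  assumes "compact X" "0 < a"
  shows "\<exists>Y. Y \<subseteq> X \<and> finite Y \<and> (\<forall>x\<in>Y. \<forall>y\<in>Y. x \<noteq> y \<longrightarrow> a < dist x y)
            \<and> (\<forall>x\<in>X. \<exists>y\<in>Y. dist x y \<le> a)"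
proof -
  obtain C0 where C0: "finite_delta_cover X (a/2) C0"
    using finite_delta_cover_compact assms by (metis half_gt_zero)
  define SS where "SS = {Y. Y \<subseteq> X \<and> (\<forall>x\<in>Y. \<forall>y\<in>Y. x \<noteq> y \<longrightarrow> a < dist x y)}"
  have bnd: "finite Y \<and> card Y \<le> card C0" if "Y \<in> SS" for Y
  proof -
    have sep: "\<And>x y. x \<in> Y \<Longrightarrow> y \<in> Y \<Longrightarrow> x \<noteq> y \<Longrightarrow> a/2 < dist x y"
      using that assms(2) unfolding SS_def by fastforce
    have "Y \<subseteq> X" using that unfolding SS_def by blast
    from card_separated_le_cover[OF C0 this sep] show ?thesis by blast
  qed
  have "card ` SS \<subseteq> {..card C0}" using bnd by (auto simp del: atMost_iff)
  then have fin: "finite (card ` SS)" by (rule finite_subset) simp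
  have "{} \<in> SS" unfolding SS_def by auto
  then have ne: "card ` SS \<noteq> {}" by auto
  obtain Y where Y: "Y \<in> SS" "card Y = Max (card ` SS)"
    using Max_in[OF fin ne] by auto
  have "\<exists>y\<in>Y. dist x y \<le> a" if x: "x \<in> X" for x
  proof (rule ccontr)
    assume "\<not> ?thesis"
    then have far: "\<forall>y\<in>Y. a < dist x y" by (simp add: not_le)
    then have "x \<notin> Y" using assms(2) by force
    have "insert x Y \<in> SS"
      using Y(1) x far unfolding SS_def by (simp add: dist_commute)
    then have "card (insert x Y) \<le> Max (card ` SS)"
      using fin by (intro Max_ge) (auto simp del: card_insert_disjoint)
    moreover have "card (insert x Y) = Suc (card Y)" using bnd[OF Y(1)] \<open>x \<notin> Y\<close> by simp
    ultimately show False using Y(2) by simp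
  qed
  moreover have "Y \<subseteq> X" "\<forall>x\<in>Y. \<forall>y\<in>Y. x \<noteq> y \<longrightarrow> a < dist x y"
    using Y(1) unfolding SS_def by simp_all
  moreover have "finite Y" using bnd[OF Y(1)] by simp
  ultimately show ?thesis by blast
qed

lemma cover_num_le_card_separated:
  fixes X :: "'a::metric_space set"
  assumes "compact X" "0 < a"
  shows "\<exists>Y. Y \<subseteq> X \<and> finite Y \<and> (\<forall>x\<in>Y. \<forall>y\<in>Y. x \<noteq> y \<longrightarrow> a < dist x y)
            \<and> cover_num X (2*a) \<le> card Y"
proof -
  obtain Y where Y: "Y \<subseteq> X" "finite Y" "\<forall>x\<in>Y. \<forall>y\<in>Y. x \<noteq> y \<longrightarrow> a < dist x y"
    "\<forall>x\<in>X. \<exists>y\<in>Y. dist x y \<le> a"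
    using maximal_separated_subset[OF assms] by blast
  have "diameter (cball y a) \<le> 2*a" for y
    using diameter_cball_le[of a y] assms(2) by simp
  moreover have "X \<subseteq> \<Union>((\<lambda>y. cball y a) ` Y)"
  proof
    fix x assume "x \<in> X"
    then obtain y where "y \<in> Y" "dist x y \<le> a" using Y(4) by blast
    then show "x \<in> \<Union>((\<lambda>y. cball y a) ` Y)" by (auto simp: dist_commute)
  qed
  ultimately have "finite_delta_cover X (2*a) ((\<lambda>y. cball y a) ` Y)"
    using Y(2) unfolding finite_delta_cover_def by auto
  then have "cover_num X (2*a) \<le> card ((\<lambda>y. cball y a) ` Y)" by (rule cover_num_le_card)
  also have "\<dots> \<le> card Y" using Y(2) card_image_le by blast
  finally show ?thesis using Y by blast
qed

section \<open>Packing measure and upper box dimension\<close>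

lemma upper_box_dim_compact:
  fixes X :: "'a::metric_space set"
  assumes "compact X"
  shows "upper_box_dim X = Limsup (at_right 0) (\<lambda>\<delta>. ereal (ln (real (cover_num X \<delta>)) / - ln \<delta>))"
  unfolding upper_box_dim_def using finite_delta_cover_compact[OF assms] by simp

lemma radius_le_dist_if_disjoint_balls:
  fixes P :: "('a::metric_space \<times> real) set"
  assumes "disjoint_family_on (\<lambda>(x,r). ball x r) P" "p \<in> P" "q \<in> P" "p \<noteq> q" "0 < snd p"
  shows "snd q \<le> dist (fst p) (fst q)"
proof (rule ccontr)
  assume "\<not> ?thesis"
  then have "fst p \<in> (\<lambda>(x,r). ball x r) p \<inter> (\<lambda>(x,r). ball x r) q"
    using assms(5) by (cases p, cases q) (simp add: dist_commute)
  then show False using assms(1-4) unfolding disjoint_family_on_def by blast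
qed

lemma card_packing_le_cover_num:
  fixes X :: "'a::metric_space set" and Q :: "('a \<times> real) set"
  assumes "compact X" "0 < \<rho>" "finite Q" "\<forall>p\<in>Q. fst p \<in> X \<and> \<rho> < snd p"
    "disjoint_family_on (\<lambda>(x,r). ball x r) Q"
  shows "card Q \<le> cover_num X \<rho>"
proof -
  obtain C where C: "finite_delta_cover X \<rho> C" "card C = cover_num X \<rho>"
    using cover_num_attained finite_delta_cover_compact[OF assms(1,2)] by blast
  have pos: "0 < snd p" if "p \<in> Q" for p using assms(2,4) that by force
  have sep: "\<rho> < dist (fst p) (fst q)" if "p \<in> Q" "q \<in> Q" "p \<noteq> q" for p q
    using radius_le_dist_if_disjoint_balls[OF assms(5) that pos[OF that(1)]] assms(4) that(2)
    by force
  have "inj_on fst Q"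
    using sep by (metis dist_self inj_onI assms(2) not_less_iff_gr_or_eq)
  moreover have "card (fst ` Q) \<le> card C"
    using assms(4) sep by (intro card_separated_le_cover(2)[OF C(1)]) auto
  ultimately show ?thesis using C(2) card_image by fastforce
qed

lemma dyadic_level_bounds:
  fixes \<delta> r :: real
  assumes "0 < r" "r \<le> \<delta>"
  defines "k \<equiv> nat \<lfloor>log 2 (\<delta> / r)\<rfloor>"
  shows "2 powr real k \<le> \<delta> / r" "\<delta> / r < 2 powr (real k + 1)"
proof -
  define L where "L = log 2 (\<delta> / r)"
  have ge1: "1 \<le> \<delta> / r" using assms by simp
  then have "0 \<le> L" unfolding L_def by simp
  then have k: "real k = of_int \<lfloor>L\<rfloor>" unfolding k_def L_def by simp
  have L: "2 powr L = \<delta> / r" unfolding L_def using ge1 by simp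
  have "2 powr real k \<le> 2 powr L" unfolding k by (rule powr_mono) auto
  then show "2 powr real k \<le> \<delta> / r" unfolding L .
  have "2 powr L < 2 powr (real k + 1)" unfolding k
    by (rule powr_less_mono) (auto simp: real_of_int_floor_add_one_gt)
  then show "\<delta> / r < 2 powr (real k + 1)" unfolding L .
qed

lemma dyadic_packing_term_eq:
  assumes "0 < (\<delta>::real)"
  shows "(\<delta> / 2 powr (real m + 2)) powr (-t) * (2 * \<delta> / 2 powr real m) powr s
   = \<delta> powr (s - t) * (2 powr (2*t) * 2 powr s) * (2 powr (t - s)) ^ m"
proof -
  have "(2 powr (t - s)) ^ m = exp (real m * ((t - s) * ln 2))"
    by (simp add: powr_def exp_of_nat_mult[symmetric])
  then show ?thesis using assms
    by (simp add: powr_def ln_div ln_mult exp_add[symmetric] algebra_simps)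
qed

text \<open>Group the balls of a \<delta>-packing into dyadic radius classes; the class of radii in
  (\<delta> 2^-(m+1), \<delta> 2^-m] has at most N(\<delta> 2^-(m+2)) members, which gives a geometric series.\<close>
lemma packing_sum_le:
  fixes X :: "'a::metric_space set" and P :: "('a \<times> real) set"
  assumes P: "finite P" "\<forall>(x,r)\<in>P. x \<in> X \<and> 0 < r \<and> r \<le> \<delta>" "disjoint_family_on (\<lambda>(x,r). ball x r) P"
    and X: "compact X" and \<delta>: "0 < \<delta>" and st: "t < s" "0 \<le> s"
    and N: "\<And>\<rho>. 0 < \<rho> \<Longrightarrow> \<rho> < \<delta> \<Longrightarrow> real (cover_num X \<rho>) \<le> \<rho> powr (-t)"
  shows "(\<Sum>(x,r)\<in>P. (2*r) powr s) \<le> \<delta> powr (s-t) * (2 powr (2*t) * 2 powr s) / (1 - 2 powr (t-s))"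
proof -
  define kf where "kf p = nat \<lfloor>log 2 (\<delta> / snd p)\<rfloor>" for p :: "'a \<times> real"
  define q where "q = (2::real) powr (t-s)"
  define A where "A = \<delta> powr (s-t) * (2 powr (2*t) * 2 powr s)"
  define h where "h m = (2*\<delta> / 2 powr real m) powr s" for m :: nat
  have "(2::real) powr (t-s) < 2 powr 0" using st by (intro powr_less_mono) auto
  then have q01: "0 < q" "q < 1" unfolding q_def by auto
  have Pp: "fst p \<in> X" "0 < snd p" "snd p \<le> \<delta>" if "p \<in> P" for p using P(2) that by auto
  note kf_bounds = dyadic_level_bounds[OF Pp(2,3), folded kf_def]
  have term_le: "(2 * snd p) powr s \<le> h (kf p)" if p: "p \<in> P" for p
  proof -
    have "snd p * 2 powr real (kf p) \<le> \<delta>" using kf_bounds(1)[OF p p] Pp(2)[OF p] by (simp add: field_simps)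
    then have "2 * snd p \<le> 2 * \<delta> / 2 powr real (kf p)" by (simp add: field_simps)
    then show ?thesis unfolding h_def using Pp(2)[OF p] st(2) by (intro powr_mono2) auto
  qed
  have class_card: "real (card {p\<in>P. kf p = m}) \<le> (\<delta> / 2 powr (real m + 2)) powr (-t)" for m
  proof -
    define \<rho> where "\<rho> = \<delta> / 2 powr (real m + 2)"
    have "(2::real) powr 0 < 2 powr (real m + 2)" by (intro powr_less_mono) auto
    then have \<rho>: "0 < \<rho>" "\<rho> < \<delta>" unfolding \<rho>_def using \<delta> by (auto simp: field_simps)
    have "\<rho> < snd p" if "p \<in> P" "kf p = m" for p
    proof -
      have "\<delta> / snd p < 2 powr (real m + 1)" using kf_bounds(2)[OF that(1) that(1)] that(2) by simp
      also have "\<dots> < 2 powr (real m + 2)" by (rule powr_less_mono) auto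
      finally have "\<delta> / snd p < 2 powr (real m + 2)" .
      then show ?thesis unfolding \<rho>_def using Pp(2)[OF that(1)] by (simp add: field_simps)
    qed
    then have "card {p\<in>P. kf p = m} \<le> cover_num X \<rho>"
      using P Pp(1) by (intro card_packing_le_cover_num[OF X \<rho>(1)])
        (auto intro: disjoint_family_on_mono[rotated])
    then show ?thesis using N[OF \<rho>] unfolding \<rho>_def by linarith
  qed
  have "(\<Sum>(x,r)\<in>P. (2*r) powr s) = (\<Sum>p\<in>P. (2 * snd p) powr s)" by (simp add: split_def)
  also have "\<dots> \<le> (\<Sum>p\<in>P. h (kf p))" using term_le by (rule sum_mono)
  also have "\<dots> = (\<Sum>m\<in>kf ` P. (\<Sum>p\<in>{p\<in>P. kf p = m}. h (kf p)))"
    by (rule sum.image_gen[OF P(1)])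
  also have "\<dots> = (\<Sum>m\<in>kf ` P. real (card {p\<in>P. kf p = m}) * h m)"
    by (rule sum.cong) auto
  also have "\<dots> \<le> (\<Sum>m\<in>kf ` P. (\<delta> / 2 powr (real m + 2)) powr (-t) * h m)"
    by (intro sum_mono mult_right_mono class_card) (simp add: h_def)
  also have "\<dots> = (\<Sum>m\<in>kf ` P. A * q ^ m)"
    unfolding h_def A_def q_def using dyadic_packing_term_eq[OF \<delta>] by simp
  also have "\<dots> = A * (\<Sum>m\<in>kf ` P. q ^ m)" by (simp add: sum_distrib_left)
  also have "\<dots> \<le> A * (\<Sum>m. q ^ m)"
    using q01 P(1) unfolding A_def
    by (intro mult_left_mono sum_le_suminf) (auto intro: summable_geometric)
  also have "\<dots> = A / (1 - q)" using q01 by (simp add: suminf_geometric)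
  finally show ?thesis unfolding A_def q_def by simp
qed

lemma cover_num_le_powr_if_upper_box_dim_less:
  fixes X :: "'a::metric_space set"
  assumes X: "compact X" "X \<noteq> {}" and "upper_box_dim X < ereal t"
  shows "\<exists>b>0. \<forall>\<rho>. 0 < \<rho> \<longrightarrow> \<rho> < b \<longrightarrow> real (cover_num X \<rho>) \<le> \<rho> powr (-t)"
proof -
  have "\<forall>\<^sub>F \<delta> in at_right 0. ereal (ln (real (cover_num X \<delta>)) / - ln \<delta>) < ereal t"
    using Limsup_lessD assms(3) unfolding upper_box_dim_compact[OF X(1)] by blast
  then obtain b where b: "b > 0"
    "\<And>\<rho>. \<rho> > 0 \<Longrightarrow> \<rho> < b \<Longrightarrow> ln (real (cover_num X \<rho>)) / - ln \<rho> < t"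
    unfolding eventually_at_right_field by auto
  have "real (cover_num X \<rho>) \<le> \<rho> powr (-t)" if \<rho>: "0 < \<rho>" "\<rho> < min b 1" for \<rho>
  proof -
    have "1 \<le> cover_num X \<rho>"
      using cover_num_ge_1[OF X(2) finite_delta_cover_compact[OF X(1) \<rho>(1)]] .
    moreover have "0 < - ln \<rho>" using \<rho> by simp
    then have "ln (real (cover_num X \<rho>)) < t * (- ln \<rho>)"
      using b(2)[of \<rho>] \<rho> by (simp only: pos_divide_less_eq)
    then have "ln (real (cover_num X \<rho>)) < ln (\<rho> powr (-t))" by simp
    ultimately show ?thesis using \<rho>(1) by (subst (asm) ln_less_cancel_iff) auto
  qed
  then show ?thesis using b(1) by (intro exI[of _ "min b 1"]) auto
qed

lemma packing_measure_zero_if_upper_box_dim_less: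
  fixes X :: "'a::metric_space set"
  assumes X: "compact X" "X \<noteq> {}" and "upper_box_dim X < ereal s" "0 \<le> s"
  shows "packing_measure s X = 0"
proof -
  obtain t where t: "upper_box_dim X < ereal t" "ereal t < ereal s"
    using ereal_dense2[OF assms(3)] by blast
  then have ts: "t < s" by simp
  obtain b where b: "b > 0" "\<And>\<rho>. 0 < \<rho> \<Longrightarrow> \<rho> < b \<Longrightarrow> real (cover_num X \<rho>) \<le> \<rho> powr (-t)"
    using cover_num_le_powr_if_upper_box_dim_less[OF X t(1)] by blast
  define M where "M = 2 powr (2*t) * 2 powr s / (1 - 2 powr (t-s))"
  have "(2::real) powr (t-s) < 2 powr 0" using ts by (intro powr_less_mono) auto
  then have M: "0 < M" unfolding M_def by simp
  have pre_small: "packing_premeasure s X \<le> ennreal e" if e: "0 < e" for e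
  proof -
    define \<delta> where "\<delta> = min (b/2) ((e/M) powr (1/(s-t)))"
    have \<delta>: "0 < \<delta>" "\<delta> < b" unfolding \<delta>_def using b e M by auto
    have "\<delta> powr (s-t) \<le> ((e/M) powr (1/(s-t))) powr (s-t)"
      unfolding \<delta>_def using ts \<delta>(1) by (intro powr_mono2) (auto simp: \<delta>_def)
    also have "\<dots> = e / M" using ts e M by (simp add: powr_powr)
    finally have small: "\<delta> powr (s-t) * M \<le> e" using M by (simp add: field_simps)
    have N: "\<And>\<rho>. 0 < \<rho> \<Longrightarrow> \<rho> < \<delta> \<Longrightarrow> real (cover_num X \<rho>) \<le> \<rho> powr (-t)"
      using b(2) \<delta>(2) by simp
    have "packing_pre_delta s \<delta> X \<le> ennreal e"
      unfolding packing_pre_delta_def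
    proof (rule SUP_least)
      fix P assume "P \<in> {P. finite P \<and> (\<forall>(x,r)\<in>P. x \<in> X \<and> 0 < r \<and> r \<le> \<delta>) \<and>
                  disjoint_family_on (\<lambda>(x,r). ball x r) P}"
      then have P: "finite P" "\<forall>(x,r)\<in>P. x \<in> X \<and> 0 < r \<and> r \<le> \<delta>"
        "disjoint_family_on (\<lambda>(x,r). ball x r) P" by auto
      have "(\<Sum>(x,r)\<in>P. (2*r) powr s) \<le> \<delta> powr (s-t) * (2 powr (2*t) * 2 powr s) / (1 - 2 powr (t-s))"
        by (rule packing_sum_le[OF P X(1) \<delta>(1) ts assms(4) N])
      also have "\<dots> = \<delta> powr (s-t) * M" unfolding M_def by simp
      finally have le: "(\<Sum>(x,r)\<in>P. (2*r) powr s) \<le> e" using small by linarith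
      have "(\<Sum>(x,r)\<in>P. ennreal ((2*r) powr s)) = (\<Sum>p\<in>P. ennreal ((2 * snd p) powr s))"
        by (simp add: split_def)
      also have "\<dots> = ennreal (\<Sum>p\<in>P. (2 * snd p) powr s)" by (rule sum_ennreal) simp
      also have "\<dots> = ennreal (\<Sum>(x,r)\<in>P. (2*r) powr s)" by (simp add: split_def)
      also have "\<dots> \<le> ennreal e" using le by (rule ennreal_leI)
      finally show "(\<Sum>(x,r)\<in>P. ennreal ((2*r) powr s)) \<le> ennreal e" .
    qed
    moreover have "packing_premeasure s X \<le> packing_pre_delta s \<delta> X"
      unfolding packing_premeasure_def using \<delta>(1) by (intro INF_lower) simp
    ultimately show ?thesis by (rule order_trans[rotated])
  qed
  have "packing_premeasure s X \<le> 0"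
    by (rule ennreal_le_epsilon) (use pre_small in simp)
  then have "packing_premeasure s X = 0" by simp
  have "packing_measure s X \<le> (\<Sum>i. packing_premeasure s ((\<lambda>i. X) i))"
    unfolding packing_measure_def by (rule INF_lower) auto
  also have "\<dots> = 0" using \<open>packing_premeasure s X = 0\<close> by simp
  finally show ?thesis by simp
qed

lemma upper_box_dim_nonneg:
  fixes X :: "'a::metric_space set"
  assumes X: "compact X" "X \<noteq> {}"
  shows "0 \<le> upper_box_dim X"
  unfolding upper_box_dim_compact[OF X(1)]
proof (rule le_Limsup)
  show "\<forall>\<^sub>F \<delta> in at_right 0. 0 \<le> ereal (ln (real (cover_num X \<delta>)) / - ln \<delta>)"
    unfolding eventually_at_right_field
  proof (intro exI[of _ 1] conjI allI impI)
    fix \<delta> :: real assume \<delta>: "0 < \<delta>" "\<delta> < 1"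
    have "1 \<le> cover_num X \<delta>"
      using cover_num_ge_1[OF X(2) finite_delta_cover_compact[OF X(1) \<delta>(1)]] .
    then have "0 \<le> ln (real (cover_num X \<delta>))" by simp
    moreover have "0 < - ln \<delta>" using \<delta> by simp
    ultimately have "0 \<le> ln (real (cover_num X \<delta>)) / - ln \<delta>" by (rule divide_nonneg_pos)
    then show "0 \<le> ereal (ln (real (cover_num X \<delta>)) / - ln \<delta>)"
      by (simp only: zero_ereal_def ereal_less_eq)
  qed simp
qed simp

lemma upper_box_dim_le_if_cover_num_le_powr:
  fixes X :: "'a::metric_space set"
  assumes X: "compact X" "X \<noteq> {}" and "0 < b" "0 < M"
    and N: "\<And>\<rho>. 0 < \<rho> \<Longrightarrow> \<rho> < b \<Longrightarrow> real (cover_num X \<rho>) \<le> M * \<rho> powr (-s)"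
  shows "upper_box_dim X \<le> ereal s"
  unfolding upper_box_dim_compact[OF X(1)] Limsup_le_iff
proof (intro allI impI)
  fix y :: ereal assume "ereal s < y"
  then obtain t where t: "ereal s < ereal t" "ereal t < y" using ereal_dense2 by blast
  then have st: "s < t" by simp
  define b' where "b' = min (min b 1) (exp (- ln M / (t - s)))"
  have "ereal (ln (real (cover_num X \<rho>)) / - ln \<rho>) < y" if \<rho>: "0 < \<rho>" "\<rho> < b'" for \<rho>
  proof -
    have N1: "1 \<le> cover_num X \<rho>"
      using cover_num_ge_1[OF X(2) finite_delta_cover_compact[OF X(1) \<rho>(1)]] .
    have L: "0 < - ln \<rho>" using \<rho> unfolding b'_def by simp
    have "\<rho> < exp (- ln M / (t - s))" using \<rho>(2) unfolding b'_def by simp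
    then have "ln \<rho> < - ln M / (t - s)" using \<rho>(1) by (metis ln_exp ln_less_cancel_iff exp_gt_zero)
    then have lnM: "ln M < (t - s) * (- ln \<rho>)" using st by (simp add: field_simps)
    have "ln (real (cover_num X \<rho>)) \<le> ln (M * \<rho> powr (-s))"
      using N[of \<rho>] \<rho> N1 assms(4) unfolding b'_def by (subst ln_le_cancel_iff) auto
    also have "\<dots> = ln M - s * ln \<rho>" using assms(4) \<rho>(1) by (simp add: ln_mult ln_powr)
    also have "\<dots> < t * (- ln \<rho>)" using lnM by (simp add: algebra_simps)
    finally have "ln (real (cover_num X \<rho>)) / - ln \<rho> < t" by (simp only: pos_divide_less_eq[OF L])
    then have "ereal (ln (real (cover_num X \<rho>)) / - ln \<rho>) < ereal t" by simp
    then show ?thesis using t(2) by (rule less_trans)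
  qed
  moreover have "0 < b'" unfolding b'_def using assms(3) by simp
  ultimately show "\<forall>\<^sub>F \<rho> in at_right 0. ereal (ln (real (cover_num X \<rho>)) / - ln \<rho>) < y"
    unfolding eventually_at_right_field by blast
qed

lemma packing_dim_eq_upper_box_dimI:
  fixes X :: "'a::metric_space set"
  assumes X: "compact X" "X \<noteq> {}"
    and "\<And>s. 0 \<le> s \<Longrightarrow> packing_measure s X = 0 \<Longrightarrow> upper_box_dim X \<le> ereal s"
  shows "packing_dim X = upper_box_dim X"
proof (rule antisym)
  show "upper_box_dim X \<le> packing_dim X"
    unfolding packing_dim_def
  proof (rule Inf_greatest)
    fix a assume "a \<in> {ereal s |s. 0 \<le> s \<and> packing_measure s X = 0}"
    then obtain s where "a = ereal s" "0 \<le> s" "packing_measure s X = 0" by blast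
    then show "upper_box_dim X \<le> a" using assms(3) by simp
  qed
  show "packing_dim X \<le> upper_box_dim X"
  proof (rule ccontr)
    assume "\<not> ?thesis"
    then have "upper_box_dim X < packing_dim X" by simp
    then obtain y where y: "upper_box_dim X < ereal y" "ereal y < packing_dim X"
      using ereal_dense2 by blast
    have "0 \<le> y"
      using upper_box_dim_nonneg[OF X] y(1) by (metis ereal_less_eq(5) le_less_trans less_imp_le)
    moreover have "packing_measure y X = 0"
      by (rule packing_measure_zero_if_upper_box_dim_less[OF X y(1) \<open>0 \<le> y\<close>])
    ultimately have "ereal y \<in> {ereal s |s. 0 \<le> s \<and> packing_measure s X = 0}" by blast
    then have "packing_dim X \<le> ereal y" unfolding packing_dim_def by (rule Inf_lower)
    then show False using y(2) by simp
  qed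
qed

lemma packing_measure_zero_imp_cover:
  fixes X :: "'a::metric_space set"
  assumes "packing_measure s X = 0"
  shows "\<exists>E :: nat \<Rightarrow> 'a set. X \<subseteq> (\<Union>i. E i) \<and> (\<forall>i. packing_premeasure s (E i) < 1)"
proof -
  have "packing_measure s X < 1" using assms by simp
  then have "\<exists>E\<in>{E :: nat \<Rightarrow> 'a set. X \<subseteq> (\<Union>i. E i)}. (\<Sum>i. packing_premeasure s (E i)) < 1"
    unfolding packing_measure_def INF_less_iff .
  then obtain E where E: "X \<subseteq> (\<Union>i. E i)" "(\<Sum>i. packing_premeasure s (E i)) < 1"
    by blast
  show ?thesis
  proof (intro exI[of _ E] conjI allI)
    show "X \<subseteq> (\<Union>i. E i)" by (rule E(1))
    fix i show "packing_premeasure s (E i) < 1" using ennreal_suminf_lessD[OF E(2)] .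
  qed
qed

lemma card_mult_powr_le_packing_pre_delta:
  fixes Z E :: "'a::metric_space set"
  assumes Z: "finite Z" "Z \<subseteq> E" "\<And>x y. x \<in> Z \<Longrightarrow> y \<in> Z \<Longrightarrow> x \<noteq> y \<Longrightarrow> 2*\<rho> < dist x y"
    and \<rho>: "0 < \<rho>" "\<rho> \<le> \<delta>"
  shows "ennreal (real (card Z) * (2*\<rho>) powr s) \<le> packing_pre_delta s \<delta> E"
proof -
  define P where "P = (\<lambda>z. (z, \<rho>)) ` Z"
  have inj: "inj_on (\<lambda>z. (z, \<rho>)) Z" by (rule inj_onI) simp
  have "disjoint_family_on (\<lambda>(x,r). ball x r) P" unfolding disjoint_family_on_def
  proof (intro ballI impI)
    fix p q assume pq: "p \<in> P" "q \<in> P" "p \<noteq> q"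
    then obtain x y where xy: "x \<in> Z" "y \<in> Z" "p = (x, \<rho>)" "q = (y, \<rho>)" "x \<noteq> y"
      unfolding P_def by blast
    show "(\<lambda>(x,r). ball x r) p \<inter> (\<lambda>(x,r). ball x r) q = {}"
    proof (rule ccontr)
      assume "\<not> ?thesis"
      then obtain v where "dist x v < \<rho>" "dist y v < \<rho>" using xy by auto
      then have "dist x y < 2*\<rho>" using dist_triangle[of x y v] by (simp add: dist_commute)
      then show False using Z(3)[OF xy(1,2,5)] by simp
    qed
  qed
  then have P: "P \<in> {P. finite P \<and> (\<forall>(x,r)\<in>P. x \<in> E \<and> 0 < r \<and> r \<le> \<delta>) \<and>
                  disjoint_family_on (\<lambda>(x,r). ball x r) P}"
    unfolding P_def using Z(1,2) \<rho> by blast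
  have "ennreal (real (card Z) * (2*\<rho>) powr s) = (\<Sum>z\<in>Z. ennreal ((2*\<rho>) powr s))"
    by (simp add: ennreal_mult' ennreal_of_nat_eq_real_of_nat)
  also have "\<dots> = (\<Sum>(x,r)\<in>P. ennreal ((2*r) powr s))"
    unfolding P_def by (subst sum.reindex[OF inj]) simp
  also have "\<dots> \<le> packing_pre_delta s \<delta> E"
    unfolding packing_pre_delta_def by (rule SUP_upper[OF P])
  finally show ?thesis .
qed

text \<open>A maximal 4\<rho>-separated subset of G, moved by less than \<rho> into E, is the set of
  centres of a \<rho>-packing of E.\<close>
lemma cover_num_mult_powr_le_packing_pre_delta:
  fixes G E :: "'a::metric_space set"
  assumes G: "compact G" "G \<subseteq> closure E" and \<rho>: "0 < \<rho>" "\<rho> \<le> \<delta>"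
  shows "ennreal (real (cover_num G (8*\<rho>)) * (2*\<rho>) powr s) \<le> packing_pre_delta s \<delta> E"
proof -
  have "0 < 4*\<rho>" using \<rho> by simp
  obtain Y where Y: "Y \<subseteq> G" "finite Y" "\<forall>x\<in>Y. \<forall>y\<in>Y. x \<noteq> y \<longrightarrow> 4*\<rho> < dist x y"
      "cover_num G (2*(4*\<rho>)) \<le> card Y"
    using cover_num_le_card_separated[OF G(1) \<open>0 < 4*\<rho>\<close>] by blast
  have "\<forall>y\<in>Y. \<exists>z\<in>E. dist z y < \<rho>"
  proof
    fix y assume "y \<in> Y"
    then have "y \<in> closure E" using Y(1) G(2) by blast
    then show "\<exists>z\<in>E. dist z y < \<rho>" using \<rho>(1) unfolding closure_approachable by blast
  qed
  then obtain z where z: "\<And>y. y \<in> Y \<Longrightarrow> z y \<in> E \<and> dist (z y) y < \<rho>" by metis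
  have far: "2*\<rho> < dist (z x) (z y)" if xy: "x \<in> Y" "y \<in> Y" "x \<noteq> y" for x y
  proof -
    have "4*\<rho> < dist x y" using Y(3) xy by blast
    moreover have "dist x y \<le> dist x (z x) + dist (z x) (z y) + dist (z y) y"
      using dist_triangle[of x y "z x"] dist_triangle[of "z x" y "z y"] by linarith
    moreover have "dist x (z x) < \<rho>" "dist (z y) y < \<rho>" using z xy by (auto simp: dist_commute)
    ultimately show ?thesis by linarith
  qed
  have inj: "inj_on z Y"
  proof (rule inj_onI, rule ccontr)
    fix x y assume xy: "x \<in> Y" "y \<in> Y" "z x = z y" "x \<noteq> y"
    have "2*\<rho> < dist (z x) (z y)" by (rule far[OF xy(1,2,4)])
    then show False using xy(3) \<rho>(1) by simp
  qed
  have "ennreal (real (cover_num G (8*\<rho>)) * (2*\<rho>) powr s) \<le> ennreal (real (card (z ` Y)) * (2*\<rho>) powr s)"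
    using Y(4) card_image[OF inj] by (intro ennreal_leI mult_right_mono) simp_all
  also have "\<dots> \<le> packing_pre_delta s \<delta> E"
  proof (rule card_mult_powr_le_packing_pre_delta[OF _ _ _ \<rho>])
    show "finite (z ` Y)" using Y(2) by simp
    show "z ` Y \<subseteq> E" using z by auto
    fix u v assume "u \<in> z ` Y" "v \<in> z ` Y" "u \<noteq> v"
    then obtain x y where "x \<in> Y" "y \<in> Y" "x \<noteq> y" "u = z x" "v = z y" by blast
    then show "2*\<rho> < dist u v" using far by blast
  qed
  finally show ?thesis .
qed

lemma Baire_compact_ball_in_closure:
  fixes X :: "'a::metric_space set" and E :: "nat \<Rightarrow> 'a set"
  assumes X: "compact X" "X \<noteq> {}" "X \<subseteq> (\<Union>i. E i)"
  shows "\<exists>i x e. x \<in> X \<and> 0 < e \<and> X \<inter> ball x e \<subseteq> closure (E i)"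
proof (rule ccontr)
  assume nex: "\<not> ?thesis"
  let ?T = "top_of_set X"
  define G where "G i = X \<inter> closure (E i)" for i
  have int0: "?T interior_of (G i) = {}" for i
  proof (rule ccontr)
    assume "?T interior_of (G i) \<noteq> {}"
    then obtain y U where yU: "openin ?T U" "y \<in> U" "U \<subseteq> G i" unfolding interior_of_def by blast
    then obtain V where V: "open V" "U = X \<inter> V" unfolding openin_open by blast
    then obtain e where e: "0 < e" "ball y e \<subseteq> V" using yU(2) open_contains_ball by blast
    have "X \<inter> ball y e \<subseteq> closure (E i)" using e(2) V(2) yU(3) unfolding G_def by blast
    moreover have "y \<in> X" using yU(2) V(2) by blast
    ultimately show False using nex e(1) by blast
  qed
  have sp: "locally_compact_space ?T \<and> regular_space ?T"
  proof
    have cs: "compact_space ?T" using X(1) by (intro compact_space_subtopology) simp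
    then show "locally_compact_space ?T" by (rule compact_imp_locally_compact_space)
    show "regular_space ?T"
      by (rule compact_Hausdorff_imp_regular_space[OF cs Hausdorff_space_subtopology]) simp
  qed
  have "?T interior_of \<Union>(range G) = {}"
  proof (rule Baire_category_alt)
    show "completely_metrizable_space ?T \<or> locally_compact_space ?T \<and> regular_space ?T" using sp by blast
    show "countable (range G)" by simp
    fix T assume "T \<in> range G"
    then obtain i where i: "T = G i" by blast
    show "closedin ?T T \<and> ?T interior_of T = {}"
      unfolding i using int0 closedin_closed_Int[of "closure (E i)" X] unfolding G_def by simp
  qed
  moreover have "\<Union>(range G) = X"
  proof
    show "\<Union>(range G) \<subseteq> X" unfolding G_def by blast
    show "X \<subseteq> \<Union>(range G)"
    proof
      fix x assume "x \<in> X"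
      then obtain i where "x \<in> E i" using X(3) by blast
      then have "x \<in> G i" using \<open>x \<in> X\<close> closure_subset unfolding G_def by blast
      then show "x \<in> \<Union>(range G)" by blast
    qed
  qed
  ultimately have "?T interior_of (topspace ?T) = {}" by simp
  then show False using X(2) interior_of_topspace[of ?T] by simp
qed

lemma cover_num_le_powr_if_packing_pre_delta_less_1:
  fixes G E :: "'a::metric_space set"
  assumes G: "compact G" "G \<subseteq> closure E" and E: "packing_pre_delta s \<delta> E < 1"
    and \<rho>: "0 < \<rho>" "\<rho> \<le> 8*\<delta>"
  shows "real (cover_num G \<rho>) \<le> 4 powr s * \<rho> powr (-s)"
proof -
  have "0 < \<rho>/8" "\<rho>/8 \<le> \<delta>" using \<rho> by simp_all
  from cover_num_mult_powr_le_packing_pre_delta[OF G this, of s]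
  have "ennreal (real (cover_num G \<rho>) * (\<rho>/4) powr s) \<le> packing_pre_delta s \<delta> E" by simp
  then have "ennreal (real (cover_num G \<rho>) * (\<rho>/4) powr s) < 1"
    using E by (rule le_less_trans)
  then have "real (cover_num G \<rho>) * (\<rho>/4) powr s < 1" by simp
  then have "real (cover_num G \<rho>) \<le> 1 / (\<rho>/4) powr s"
    using \<rho>(1) by (simp add: field_simps)
  also have "\<dots> = 4 powr s * \<rho> powr (-s)"
    using \<rho>(1) by (simp add: powr_divide powr_minus_divide)
  finally show ?thesis .
qed

section \<open>Random attractors\<close>

lemma INT_UN_eq_UN_INT_decseq:
  fixes B :: "'i \<Rightarrow> nat \<Rightarrow> 'a set"
  assumes "finite I" "\<And>u. u \<in> I \<Longrightarrow> decseq (B u)"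
  shows "(\<Inter>n. \<Union>u\<in>I. B u n) = (\<Union>u\<in>I. \<Inter>n. B u n)"
proof
  show "(\<Inter>n. \<Union>u\<in>I. B u n) \<subseteq> (\<Union>u\<in>I. \<Inter>n. B u n)"
  proof
    fix x assume x: "x \<in> (\<Inter>n. \<Union>u\<in>I. B u n)"
    show "x \<in> (\<Union>u\<in>I. \<Inter>n. B u n)"
    proof (rule ccontr)
      assume "x \<notin> (\<Union>u\<in>I. \<Inter>n. B u n)"
      then have "\<forall>u\<in>I. \<exists>n. x \<notin> B u n" by blast
      then obtain f where f: "\<And>u. u \<in> I \<Longrightarrow> x \<notin> B u (f u)" by metis
      obtain u where u: "u \<in> I" "x \<in> B u (Max (f ` I))" using x by blast
      have "f u \<le> Max (f ` I)" using assms(1) u(1) by simp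
      then have "B u (Max (f ` I)) \<subseteq> B u (f u)" using assms(2)[OF u(1)] unfolding decseq_def by blast
      then show False using u(2) f[OF u(1)] by blast
    qed
  qed
qed blast

lemma compw_shift: "compw S w (Suc m) us = compw S (\<lambda>n. w (Suc n)) m us"
  by (induction us arbitrary: m) auto

definition words :: "(nat \<Rightarrow> nat set) \<Rightarrow> (nat \<Rightarrow> nat) \<Rightarrow> nat \<Rightarrow> nat list set" where
  "words J w n = {us. length us = n \<and> (\<forall>m<n. us ! m \<in> J (w m))}"

definition stage :: "'a set \<Rightarrow> (nat \<Rightarrow> nat set) \<Rightarrow> (nat \<Rightarrow> nat \<Rightarrow> 'a \<Rightarrow> 'a) \<Rightarrow> (nat \<Rightarrow> nat) \<Rightarrow> nat \<Rightarrow> 'a set" where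
  "stage K J S w n = (\<Union>us\<in>words J w n. compw S w 0 us ` K)"

lemma rattractor_eq_INT_stage: "rattractor K J S w = (\<Inter>n. stage K J S w n)"
  unfolding rattractor_def stage_def words_def by blast

lemma words_0: "words J w 0 = {[]}"
  unfolding words_def by auto

lemma words_Suc: "us \<in> words J w (Suc n) \<longleftrightarrow>
   (\<exists>u us'. us = u # us' \<and> u \<in> J (w 0) \<and> us' \<in> words J (\<lambda>n. w (Suc n)) n)"
proof
  assume us: "us \<in> words J w (Suc n)"
  then obtain u us' where "us = u # us'" unfolding words_def by (cases us) auto
  moreover have "u \<in> J (w 0)" using us calculation unfolding words_def by force
  moreover have "us' \<in> words J (\<lambda>n. w (Suc n)) n"
    using us calculation unfolding words_def by force
  ultimately show "\<exists>u us'. us = u # us' \<and> u \<in> J (w 0) \<and> us' \<in> words J (\<lambda>n. w (Suc n)) n" by blast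
next
  assume "\<exists>u us'. us = u # us' \<and> u \<in> J (w 0) \<and> us' \<in> words J (\<lambda>n. w (Suc n)) n"
  then obtain u us' where h: "us = u # us'" "u \<in> J (w 0)" "us' \<in> words J (\<lambda>n. w (Suc n)) n" by blast
  show "us \<in> words J w (Suc n)" unfolding words_def
  proof (intro CollectI conjI allI impI)
    show "length us = Suc n" using h unfolding words_def by simp
    fix m assume "m < Suc n"
    then show "us ! m \<in> J (w m)" using h unfolding words_def by (cases m) auto
  qed
qed

lemma words_Suc_eq_UN:
  "words J w (Suc n) = (\<Union>u\<in>J (w 0). (#) u ` words J (\<lambda>n. w (Suc n)) n)"
proof (intro equalityI subsetI)
  fix us assume "us \<in> words J w (Suc n)"
  then obtain u us' where "us = u # us'" "u \<in> J (w 0)" "us' \<in> words J (\<lambda>n. w (Suc n)) n"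
    using words_Suc by metis
  then show "us \<in> (\<Union>u\<in>J (w 0). (#) u ` words J (\<lambda>n. w (Suc n)) n)" by blast
next
  fix us assume "us \<in> (\<Union>u\<in>J (w 0). (#) u ` words J (\<lambda>n. w (Suc n)) n)"
  then obtain u us' where "us = u # us'" "u \<in> J (w 0)" "us' \<in> words J (\<lambda>n. w (Suc n)) n"
    by blast
  then show "us \<in> words J w (Suc n)" using words_Suc by blast
qed

lemma stage_0: "stage K J S w 0 = K"
  unfolding stage_def words_0 by simp

lemma stage_Suc: "stage K J S w (Suc n) = (\<Union>u\<in>J (w 0). S (w 0) u ` stage K J S (\<lambda>n. w (Suc n)) n)"
  unfolding stage_def words_Suc_eq_UN by (simp add: UN_UN_flatten compw_shift image_comp image_UN) blast

lemma finite_words: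
  assumes "\<forall>n. w n \<in> I" "finite I" "\<forall>i\<in>I. finite (J i)"
  shows "finite (words J w n)"
proof -
  have "words J w n \<subseteq> {xs. set xs \<subseteq> (\<Union>i\<in>I. J i) \<and> length xs = n}"
  proof
    fix us assume us: "us \<in> words J w n"
    have "set us \<subseteq> (\<Union>i\<in>I. J i)"
    proof
      fix a assume "a \<in> set us"
      then obtain m where "m < length us" "us ! m = a" by (metis in_set_conv_nth)
      then show "a \<in> (\<Union>i\<in>I. J i)" using us assms(1) unfolding words_def by auto
    qed
    then show "us \<in> {xs. set xs \<subseteq> (\<Union>i\<in>I. J i) \<and> length xs = n}" using us unfolding words_def by simp
  qed
  moreover have "finite (\<Union>i\<in>I. J i)" using assms(2,3) by simp
  ultimately show ?thesis using finite_lists_length_eq finite_subset by blast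
qed

locale rifs_uniform =
  fixes K :: "'a::metric_space set" and N :: nat and J :: "nat \<Rightarrow> nat set"
    and S :: "nat \<Rightarrow> nat \<Rightarrow> 'a \<Rightarrow> 'a" and c r :: real
  assumes rifs: "rifs K N J S" and c: "0 < c" and r: "0 \<le> r" "r < 1"
    and lip: "\<And>i j x y. i \<in> {1..N} \<Longrightarrow> j \<in> J i \<Longrightarrow> x \<in> K \<Longrightarrow> y \<in> K \<Longrightarrow>
       c * dist x y \<le> dist (S i j x) (S i j y) \<and> dist (S i j x) (S i j y) \<le> r * dist x y"
begin

definition admissible :: "(nat \<Rightarrow> nat) \<Rightarrow> bool" where "admissible w \<longleftrightarrow> (\<forall>n. w n \<in> {1..N})"

lemma admissible_Suc: "admissible w \<Longrightarrow> admissible (\<lambda>n. w (Suc n))" unfolding admissible_def by auto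
lemma admissible_shift: "admissible w \<Longrightarrow> admissible (\<lambda>n. w (n + k))" unfolding admissible_def by auto

lemma compact_K: "compact K" and K_nonempty: "K \<noteq> {}"
  using rifs unfolding rifs_def by auto

lemma finite_J: "i \<in> {1..N} \<Longrightarrow> finite (J i)" and J_nonempty: "i \<in> {1..N} \<Longrightarrow> J i \<noteq> {}"
  using rifs unfolding rifs_def by auto

lemma S_maps_K: assumes "i \<in> {1..N}" "j \<in> J i" "x \<in> K" shows "S i j x \<in> K"
proof -
  have "S i j ` K \<subseteq> K" using rifs assms(1,2) unfolding rifs_def by blast
  then show ?thesis using assms(3) by blast
qed

lemma continuous_on_S: assumes "i \<in> {1..N}" "j \<in> J i" shows "continuous_on K (S i j)"
proof (rule continuous_on_if_dist_le)
  fix x y assume "x \<in> K" "y \<in> K"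
  then have "dist (S i j x) (S i j y) \<le> r * dist x y" using lip[OF assms] by blast
  also have "\<dots> \<le> dist x y" using r by (intro mult_left_le_one_le) auto
  finally show "dist (S i j x) (S i j y) \<le> dist x y" .
qed

lemma S_inj: assumes "i \<in> {1..N}" "j \<in> J i" "x \<in> K" "y \<in> K" "S i j x = S i j y" shows "x = y"
proof -
  have "c * dist x y \<le> 0" using lip[OF assms(1-4)] assms(5) by simp
  then have "dist x y \<le> 0" using c by (simp add: mult_le_0_iff)
  then show ?thesis by simp
qed

lemma compw_bilipschitz:
  assumes "admissible w" "us \<in> words J w n"
  shows "(\<forall>x\<in>K. compw S w 0 us x \<in> K) \<and>
    (\<forall>x\<in>K. \<forall>y\<in>K. c ^ n * dist x y \<le> dist (compw S w 0 us x) (compw S w 0 us y) \<and>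
                   dist (compw S w 0 us x) (compw S w 0 us y) \<le> r ^ n * dist x y)"
  using assms
proof (induction n arbitrary: w us)
  case 0
  then show ?case unfolding words_0 by simp
next
  case (Suc n)
  obtain u us' where h: "us = u # us'" "u \<in> J (w 0)" "us' \<in> words J (\<lambda>n. w (Suc n)) n"
    using Suc.prems(2) words_Suc by metis
  have w0: "w 0 \<in> {1..N}" using Suc.prems(1) unfolding admissible_def by auto
  note IH = Suc.IH[OF admissible_Suc[OF Suc.prems(1)] h(3)]
  have eq: "compw S w 0 us = S (w 0) u \<circ> compw S (\<lambda>n. w (Suc n)) 0 us'"
    using h(1) by (simp add: compw_shift)
  show ?case
  proof (intro conjI ballI)
    fix x assume "x \<in> K"
    then show "compw S w 0 us x \<in> K" using IH S_maps_K[OF w0 h(2)] eq by simp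
  next
    fix x y assume xy: "x \<in> K" "y \<in> K"
    let ?g = "compw S (\<lambda>n. w (Suc n)) 0 us'"
    have gK: "?g x \<in> K" "?g y \<in> K" using IH xy by auto
    have L: "c * dist (?g x) (?g y) \<le> dist (S (w 0) u (?g x)) (S (w 0) u (?g y))"
      and U: "dist (S (w 0) u (?g x)) (S (w 0) u (?g y)) \<le> r * dist (?g x) (?g y)"
      using lip[OF w0 h(2) gK] by auto
    have L2: "c ^ n * dist x y \<le> dist (?g x) (?g y)" and U2: "dist (?g x) (?g y) \<le> r ^ n * dist x y"
      using IH xy by auto
    have "c ^ Suc n * dist x y = c * (c ^ n * dist x y)" by simp
    also have "\<dots> \<le> c * dist (?g x) (?g y)" using L2 c by simp
    also have "\<dots> \<le> dist (compw S w 0 us x) (compw S w 0 us y)" using L eq by simp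
    finally show "c ^ Suc n * dist x y \<le> dist (compw S w 0 us x) (compw S w 0 us y)" .
    have "dist (compw S w 0 us x) (compw S w 0 us y) \<le> r * dist (?g x) (?g y)" using U eq by simp
    also have "\<dots> \<le> r * (r ^ n * dist x y)" using U2 r mult_left_mono by blast
    also have "\<dots> = r ^ Suc n * dist x y" by simp
    finally show "dist (compw S w 0 us x) (compw S w 0 us y) \<le> r ^ Suc n * dist x y" .
  qed
qed

lemma stage_compact_decreasing:
  assumes "admissible w"
  shows "stage K J S w n \<subseteq> K \<and> stage K J S w n \<noteq> {} \<and> compact (stage K J S w n) \<and>
         stage K J S w (Suc n) \<subseteq> stage K J S w n"
  using assms
proof (induction n arbitrary: w)
  case 0
  have w0: "w 0 \<in> {1..N}" using 0 unfolding admissible_def by auto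
  have "stage K J S w (Suc 0) \<subseteq> K"
    unfolding stage_Suc stage_0 using S_maps_K[OF w0] by auto
  then show ?case using compact_K K_nonempty unfolding stage_0 by simp
next
  case (Suc n)
  have w0: "w 0 \<in> {1..N}" using Suc.prems unfolding admissible_def by auto
  note IH = Suc.IH[OF admissible_Suc[OF Suc.prems]]
  let ?A = "stage K J S (\<lambda>n. w (Suc n))"
  have sub: "stage K J S w (Suc n) \<subseteq> K" unfolding stage_Suc using IH S_maps_K[OF w0] by blast
  have ne: "stage K J S w (Suc n) \<noteq> {}"
  proof -
    obtain u where "u \<in> J (w 0)" using J_nonempty[OF w0] by auto
    moreover obtain y where "y \<in> ?A n" using IH by auto
    ultimately show ?thesis unfolding stage_Suc by blast
  qed
  have cpt: "compact (stage K J S w (Suc n))" unfolding stage_Suc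
  proof (intro compact_UN ballI)
    show "finite (J (w 0))" using finite_J[OF w0] .
    fix u assume "u \<in> J (w 0)"
    then show "compact (S (w 0) u ` ?A n)"
      using IH continuous_on_S[OF w0] by (meson compact_continuous_image continuous_on_subset)
  qed
  have "stage K J S w (Suc (Suc n)) \<subseteq> stage K J S w (Suc n)"
    unfolding stage_Suc[of K J S w "Suc n"] stage_Suc[of K J S w n] using IH by blast
  then show ?case using sub ne cpt by blast
qed

lemma stage_antimono: assumes "admissible w" "m \<le> n" shows "stage K J S w n \<subseteq> stage K J S w m"
  using assms(2)
proof (induction n)
  case 0 then show ?case by simp
next
  case (Suc n)
  then show ?case using stage_compact_decreasing[OF assms(1), of n] by (cases "m = Suc n") auto
qed

abbreviation F where "F w \<equiv> rattractor K J S w"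

lemma
  assumes "admissible w"
  shows attractor_subset_K: "F w \<subseteq> K" and attractor_nonempty: "F w \<noteq> {}"
    and compact_attractor: "compact (F w)"
proof -
  note stage = stage_compact_decreasing[OF assms]
  have F: "F w = (\<Inter>n. stage K J S w n)" by (rule rattractor_eq_INT_stage)
  show sub: "F w \<subseteq> K" unfolding F using stage_0[of K J S w] by blast
  show "F w \<noteq> {}" unfolding F
  proof (rule compact_space_imp_nest[of "top_of_set K"])
    show "compact_space (top_of_set K)" using compact_K by (intro compact_space_subtopology) simp
    show "closedin (top_of_set K) (stage K J S w n)" for n
      using stage by (intro closed_subset) (auto intro: compact_imp_closed)
    show "stage K J S w n \<noteq> {}" for n using stage by blast
    show "decseq (stage K J S w)" using stage_antimono[OF assms] unfolding decseq_def by blast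
  qed
  have "closed (F w)" unfolding F using stage compact_imp_closed by blast
  then show "compact (F w)" using sub compact_K by (metis compact_Int_closed inf.absorb_iff2)
qed

lemma attractor_step:
  assumes "admissible w"
  shows "F w = (\<Union>u\<in>J (w 0). S (w 0) u ` F (\<lambda>n. w (Suc n)))"
proof -
  let ?w' = "\<lambda>n. w (Suc n)"
  have w0: "w 0 \<in> {1..N}" using assms unfolding admissible_def by auto
  have "F w = (\<Inter>n. stage K J S w (Suc n))"
    unfolding rattractor_eq_INT_stage
  proof (rule antisym)
    show "(\<Inter>n. stage K J S w n) \<subseteq> (\<Inter>n. stage K J S w (Suc n))" by blast
    show "(\<Inter>n. stage K J S w (Suc n)) \<subseteq> (\<Inter>n. stage K J S w n)"
    proof (rule INT_greatest)
      fix n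
      have "(\<Inter>n. stage K J S w (Suc n)) \<subseteq> stage K J S w (Suc n)" by (rule INT_lower) simp
      also have "\<dots> \<subseteq> stage K J S w n" by (rule stage_antimono[OF assms]) simp
      finally show "(\<Inter>n. stage K J S w (Suc n)) \<subseteq> stage K J S w n" .
    qed
  qed
  also have "\<dots> = (\<Inter>n. \<Union>u\<in>J (w 0). S (w 0) u ` stage K J S ?w' n)"
    by (simp only: stage_Suc)
  also have "\<dots> = (\<Union>u\<in>J (w 0). \<Inter>n. S (w 0) u ` stage K J S ?w' n)"
  proof (rule INT_UN_eq_UN_INT_decseq)
    show "finite (J (w 0))" using finite_J[OF w0] .
    show "decseq (\<lambda>n. S (w 0) u ` stage K J S ?w' n)" for u
    proof (unfold decseq_def, intro allI impI)
      fix m n :: nat assume "m \<le> n"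
      show "S (w 0) u ` stage K J S ?w' n \<subseteq> S (w 0) u ` stage K J S ?w' m"
        using stage_antimono[OF admissible_Suc[OF assms] \<open>m \<le> n\<close>] by (rule image_mono)
    qed
  qed
  also have "\<dots> = (\<Union>u\<in>J (w 0). S (w 0) u ` F ?w')"
  proof (rule SUP_cong[OF refl])
    fix u assume u: "u \<in> J (w 0)"
    have "inj_on (S (w 0) u) K"
    proof (rule inj_onI)
      fix x y assume "x \<in> K" "y \<in> K" "S (w 0) u x = S (w 0) u y"
      then show "x = y" by (rule S_inj[OF w0 u])
    qed
    moreover have "\<forall>n\<in>UNIV. stage K J S ?w' n \<subseteq> K"
      using stage_compact_decreasing[OF admissible_Suc[OF assms]] by blast
    ultimately have "S (w 0) u ` (\<Inter>n. stage K J S ?w' n) = (\<Inter>n. S (w 0) u ` stage K J S ?w' n)"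
      by (rule image_INT) simp
    then show "(\<Inter>n. S (w 0) u ` stage K J S ?w' n) = S (w 0) u ` F ?w'"
      unfolding rattractor_eq_INT_stage by simp
  qed
  finally show ?thesis .
qed

lemma attractor_eq_UN_words:
  assumes "admissible w"
  shows "F w = (\<Union>us\<in>words J w k. compw S w 0 us ` F (\<lambda>n. w (n + k)))"
  using assms
proof (induction k arbitrary: w)
  case 0
  then show ?case unfolding words_0 by simp
next
  case (Suc k)
  let ?w' = "\<lambda>n. w (Suc n)" and ?G = "F (\<lambda>n. w (n + Suc k))"
  have "F w = (\<Union>u\<in>J (w 0). S (w 0) u ` F ?w')" by (rule attractor_step[OF Suc.prems])
  also have "\<dots> = (\<Union>u\<in>J (w 0). \<Union>us\<in>words J ?w' k. S (w 0) u ` compw S ?w' 0 us ` ?G)"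
    using Suc.IH[OF admissible_Suc[OF Suc.prems]] by (simp add: image_UN)
  also have "\<dots> = (\<Union>vs\<in>words J w (Suc k). compw S w 0 vs ` ?G)"
    unfolding words_Suc_eq_UN by (simp add: UN_UN_flatten compw_shift image_comp)
  finally show ?case .
qed

lemma finite_words_admissible: "admissible w \<Longrightarrow> finite (words J w k)"
  by (rule finite_words[of w "{1..N}"]) (auto simp: admissible_def finite_J)

lemma compw_nonexpansive:
  assumes "admissible w" "us \<in> words J w k" "x \<in> K" "y \<in> K"
  shows "dist (compw S w 0 us x) (compw S w 0 us y) \<le> dist x y"
proof -
  have "dist (compw S w 0 us x) (compw S w 0 us y) \<le> r ^ k * dist x y"
    using compw_bilipschitz[OF assms(1,2)] assms(3,4) by blast
  also have "\<dots> \<le> 1 * dist x y" using r by (intro mult_right_mono power_le_one) auto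
  finally show ?thesis by simp
qed

lemma continuous_on_compw:
  assumes "admissible w" "us \<in> words J w k"
  shows "continuous_on K (compw S w 0 us)"
  using compw_nonexpansive[OF assms] by (rule continuous_on_if_dist_le)

lemma cover_num_attractor_le:
  assumes w: "admissible w" and d: "0 < d"
  shows "cover_num (F w) d \<le> card (words J w k) * cover_num (F (\<lambda>n. w (n + k))) d"
proof -
  let ?G = "F (\<lambda>n. w (n + k))"
  have gG: "admissible (\<lambda>n. w (n + k))" using admissible_shift[OF w] .
  have GK: "?G \<subseteq> K" using attractor_subset_K[OF gG] .
  have exG: "\<exists>C. finite_delta_cover ?G d C" using finite_delta_cover_compact[OF compact_attractor[OF gG] d] .
  have sub: "F w \<subseteq> (\<Union>us\<in>words J w k. compw S w 0 us ` ?G)" using attractor_eq_UN_words[OF w, of k] by simp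
  have each: "cover_num (compw S w 0 us ` ?G) d \<le> cover_num ?G d \<and> (\<exists>C. finite_delta_cover (compw S w 0 us ` ?G) d C)"
    if us: "us \<in> words J w k" for us
    using cover_num_image_nonexpansive[OF GK compw_nonexpansive[OF w us] exG] by blast
  have "cover_num (F w) d \<le> (\<Sum>us\<in>words J w k. cover_num (compw S w 0 us ` ?G) d)"
    using cover_num_UN_le[OF finite_words_admissible[OF w] sub] each by blast
  also have "\<dots> \<le> (\<Sum>us\<in>words J w k. cover_num ?G d)" using each by (intro sum_mono) blast
  also have "\<dots> = card (words J w k) * cover_num ?G d" by simp
  finally show ?thesis .
qed

lemma attractor_piece_in_ball:
  assumes w: "admissible w" and x: "x \<in> F w" and e: "0 < e"
  shows "\<exists>k us. us \<in> words J w k \<and> compw S w 0 us ` F (\<lambda>n. w (n + k)) \<subseteq> ball x e \<and>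
     compw S w 0 us ` F (\<lambda>n. w (n + k)) \<subseteq> F w"
proof -
  define B where "B = diameter K"
  have "bounded K" using compact_K by (rule compact_imp_bounded)
  then have B: "0 \<le> B" "\<And>y z. y \<in> K \<Longrightarrow> z \<in> K \<Longrightarrow> dist y z \<le> B"
    unfolding B_def by (auto intro: diameter_ge_0 diameter_bounded_bound)
  have "\<forall>\<^sub>F n in sequentially. \<bar>r^n\<bar> < e / (B+1)"
    using r B(1) e by (intro Archimedean_eventually_pow_inverse) auto
  then obtain k where k0: "\<bar>r^k\<bar> < e / (B+1)" unfolding eventually_sequentially by blast
  then have k: "r^k < e / (B+1)" using r by simp
  then have "r^k * (B+1) < e" using B(1) by (simp add: field_simps)
  moreover have "r^k * B \<le> r^k * (B+1)" using r by (intro mult_left_mono) auto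
  ultimately have rk: "r^k * B < e" by linarith
  let ?G = "F (\<lambda>n. w (n + k))"
  have GK: "?G \<subseteq> K" using attractor_subset_K[OF admissible_shift[OF w]] .
  have eq: "F w = (\<Union>us\<in>words J w k. compw S w 0 us ` ?G)" using attractor_eq_UN_words[OF w, of k] .
  then have "x \<in> (\<Union>us\<in>words J w k. compw S w 0 us ` ?G)" using x by simp
  then obtain us where us: "us \<in> words J w k" "x \<in> compw S w 0 us ` ?G" by (rule UN_E)
  from us(2) obtain z where z: "z \<in> ?G" "x = compw S w 0 us z" by (rule imageE) auto
  have "compw S w 0 us ` ?G \<subseteq> ball x e"
  proof
    fix y assume "y \<in> compw S w 0 us ` ?G"
    then obtain z' where z': "z' \<in> ?G" "y = compw S w 0 us z'" by (rule imageE) auto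
    have zK: "z \<in> K" "z' \<in> K" using z(1) z'(1) GK by auto
    have "dist x y \<le> r ^ k * dist z z'" using compw_bilipschitz[OF w us(1)] zK z(2) z'(2) by blast
    also have "\<dots> \<le> r ^ k * B" using B(2)[OF zK] r by (intro mult_left_mono) auto
    finally show "y \<in> ball x e" using rk by simp
  qed
  moreover have "compw S w 0 us ` ?G \<subseteq> F w" using eq us(1) by blast
  ultimately show ?thesis using us(1) by blast
qed


lemma cover_num_attractor_le_piece:
  assumes w: "admissible w" and us: "us \<in> words J w k" and \<rho>: "0 < \<rho>"
  shows "cover_num (F w) \<rho>
    \<le> card (words J w k) * cover_num (compw S w 0 us ` F (\<lambda>n. w (n + k))) (c^k * \<rho>)"
proof -
  let ?G = "F (\<lambda>n. w (n + k))"
  have G: "?G \<subseteq> K" "compact ?G"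
    using attractor_subset_K[OF admissible_shift[OF w]] compact_attractor[OF admissible_shift[OF w]] .
  have ck: "0 < c^k" using c by simp
  have "compact (compw S w 0 us ` ?G)"
    using compact_continuous_image[OF continuous_on_subset[OF continuous_on_compw[OF w us] G(1)] G(2)] .
  then have ex: "\<exists>C. finite_delta_cover (compw S w 0 us ` ?G) (c^k * \<rho>) C"
    by (rule finite_delta_cover_compact) (use ck \<rho> in simp)
  have low: "\<And>x y. x \<in> K \<Longrightarrow> y \<in> K \<Longrightarrow> c^k * dist x y \<le> dist (compw S w 0 us x) (compw S w 0 us y)"
    using compw_bilipschitz[OF w us] by blast
  have eq: "c^k * \<rho> / c^k = \<rho>" using c by simp
  have "cover_num ?G \<rho> \<le> cover_num (compw S w 0 us ` ?G) (c^k * \<rho>)"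
    using cover_num_le_image[OF G(1) ck low ex] unfolding eq .
  then show ?thesis using cover_num_attractor_le[OF w \<rho>, of k] by (meson mult_le_mono2 order_trans)
qed

lemma upper_box_dim_attractor_le_if_packing_measure_zero:
  assumes w: "admissible w" and "packing_measure s (F w) = 0"
  shows "upper_box_dim (F w) \<le> ereal s"
proof -
  have X: "compact (F w)" "F w \<noteq> {}" using compact_attractor[OF w] attractor_nonempty[OF w] .
  obtain E :: "nat \<Rightarrow> 'a set" where E: "F w \<subseteq> (\<Union>i. E i)" "\<And>i. packing_premeasure s (E i) < 1"
    using packing_measure_zero_imp_cover[OF assms(2)] by blast
  obtain i x0 e where x0: "x0 \<in> F w" "0 < e" "F w \<inter> ball x0 e \<subseteq> closure (E i)"
    using Baire_compact_ball_in_closure[OF X E(1)] by blast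
  obtain k us where us: "us \<in> words J w k" "compw S w 0 us ` F (\<lambda>n. w (n + k)) \<subseteq> ball x0 e"
      "compw S w 0 us ` F (\<lambda>n. w (n + k)) \<subseteq> F w"
    using attractor_piece_in_ball[OF w x0(1,2)] by blast
  define G where "G = compw S w 0 us ` F (\<lambda>n. w (n + k))"
  have wk: "admissible (\<lambda>n. w (n + k))" using admissible_shift[OF w] .
  have G: "compact G" "G \<subseteq> closure (E i)"
    using compact_continuous_image[OF continuous_on_subset[OF continuous_on_compw[OF w us(1)]
        attractor_subset_K[OF wk]] compact_attractor[OF wk]]
      us(2,3) x0(3) unfolding G_def by blast+
  obtain \<delta> where \<delta>: "0 < \<delta>" "packing_pre_delta s \<delta> (E i) < 1"
    using E(2)[of i] unfolding packing_premeasure_def INF_less_iff by auto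
  have ck: "0 < c^k" using c by simp
  define M where "M = real (card (words J w k)) * 4 powr s * (c^k) powr (-s)"
  have N: "real (cover_num (F w) \<rho>) \<le> M * \<rho> powr (-s)" if \<rho>: "0 < \<rho>" "\<rho> < 8*\<delta> / c^k" for \<rho>
  proof -
    have "c^k * \<rho> \<le> 8*\<delta>" using \<rho>(2) ck by (simp add: field_simps)
    have "real (cover_num (F w) \<rho>) \<le> card (words J w k) * real (cover_num G (c^k * \<rho>))"
      using cover_num_attractor_le_piece[OF w us(1) \<rho>(1)] unfolding G_def
      by (metis of_nat_mono of_nat_mult)
    also have "\<dots> \<le> card (words J w k) * (4 powr s * (c^k * \<rho>) powr (-s))"
      using cover_num_le_powr_if_packing_pre_delta_less_1[OF G \<delta>(2) _ \<open>c^k * \<rho> \<le> 8*\<delta>\<close>] ck \<rho>(1)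
      by (intro mult_left_mono) auto
    also have "\<dots> = M * \<rho> powr (-s)" unfolding M_def using ck \<rho>(1) by (simp add: powr_mult)
    finally show ?thesis .
  qed
  have "card (words J w k) > 0" using us(1) finite_words_admissible[OF w] card_gt_0_iff by blast
  then have "0 < M" unfolding M_def using c by (intro mult_pos_pos) auto
  moreover have "0 < 8*\<delta> / c^k" using \<delta>(1) ck by simp
  ultimately show ?thesis using upper_box_dim_le_if_cover_num_le_powr[OF X _ _ N] by blast
qed

end


lemma bilip_contraction_constants:
  fixes f :: "'a::metric_space \<Rightarrow> 'a"
  assumes "bilip_contraction K f"
  shows "\<exists>c r. 0 < c \<and> 0 \<le> r \<and> r < 1 \<and> (\<forall>x\<in>K. \<forall>y\<in>K. c * dist x y \<le> dist (f x) (f y) \<and> dist (f x) (f y) \<le> r * dist x y)"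
proof -
  obtain c r where cr: "0 < c" "r < 1" "\<And>x y. x \<in> K \<Longrightarrow> y \<in> K \<Longrightarrow> x \<noteq> y \<Longrightarrow>
        c \<le> dist (f x) (f y) / dist x y \<and> dist (f x) (f y) / dist x y \<le> r"
    using assms unfolding bilip_contraction_def by blast
  have "c * dist x y \<le> dist (f x) (f y) \<and> dist (f x) (f y) \<le> max r 0 * dist x y" if xy: "x \<in> K" "y \<in> K" for x y
  proof (cases "x = y")
    case True then show ?thesis by simp
  next
    case False
    then have d: "0 < dist x y" by simp
    have "c \<le> dist (f x) (f y) / dist x y" "dist (f x) (f y) / dist x y \<le> r" using cr(3)[OF xy False] by auto
    then have "c * dist x y \<le> dist (f x) (f y)" "dist (f x) (f y) \<le> r * dist x y"
      using d by (simp_all add: pos_le_divide_eq pos_divide_le_eq)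
    moreover have "r * dist x y \<le> max r 0 * dist x y" using d by (intro mult_right_mono) auto
    ultimately show ?thesis by linarith
  qed
  then show ?thesis using cr(1,2) by (intro exI[of _ c] exI[of _ "max r 0"]) auto
qed

lemma bilip_contraction_uniform_constants:
  fixes f :: "'i \<Rightarrow> 'a::metric_space \<Rightarrow> 'a"
  assumes "finite I" "\<And>i. i \<in> I \<Longrightarrow> bilip_contraction K (f i)"
  shows "\<exists>c r. 0 < c \<and> 0 \<le> r \<and> r < 1 \<and> (\<forall>i\<in>I. \<forall>x\<in>K. \<forall>y\<in>K.
           c * dist x y \<le> dist (f i x) (f i y) \<and> dist (f i x) (f i y) \<le> r * dist x y)"
  using assms
proof (induction rule: finite_induct)
  case empty
  show ?case by (intro exI[of _ 1] exI[of _ 0]) auto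
next
  case (insert a I)
  have "\<exists>c r. 0 < c \<and> 0 \<le> r \<and> r < 1 \<and> (\<forall>i\<in>I. \<forall>x\<in>K. \<forall>y\<in>K.
           c * dist x y \<le> dist (f i x) (f i y) \<and> dist (f i x) (f i y) \<le> r * dist x y)"
    using insert.prems by (intro insert.IH) blast
  then obtain c1 r1 where 1: "0 < c1" "0 \<le> r1" "r1 < 1" "\<forall>i\<in>I. \<forall>x\<in>K. \<forall>y\<in>K.
      c1 * dist x y \<le> dist (f i x) (f i y) \<and> dist (f i x) (f i y) \<le> r1 * dist x y"
    by blast
  obtain c2 r2 where 2: "0 < c2" "0 \<le> r2" "r2 < 1" "\<forall>x\<in>K. \<forall>y\<in>K.
      c2 * dist x y \<le> dist (f a x) (f a y) \<and> dist (f a x) (f a y) \<le> r2 * dist x y"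
    using bilip_contraction_constants[OF insert.prems[OF insertI1]] by blast
  have "min c1 c2 * dist x y \<le> dist (f i x) (f i y) \<and> dist (f i x) (f i y) \<le> max r1 r2 * dist x y"
    if i: "i \<in> insert a I" and xy: "x \<in> K" "y \<in> K" for i x y
  proof -
    obtain c' r' where c'r': "min c1 c2 \<le> c'" "r' \<le> max r1 r2"
      "c' * dist x y \<le> dist (f i x) (f i y)" "dist (f i x) (f i y) \<le> r' * dist x y"
    proof (cases "i = a")
      case True then show ?thesis using that[of c2 r2] 2(4) xy by auto
    next
      case False then show ?thesis using that[of c1 r1] 1(4) i xy by auto
    qed
    have "min c1 c2 * dist x y \<le> c' * dist x y" "r' * dist x y \<le> max r1 r2 * dist x y"
      using c'r'(1,2) by (simp_all add: mult_right_mono)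
    then show ?thesis using c'r'(3,4) by linarith
  qed
  then show ?case using 1 2 by (intro exI[of _ "min c1 c2"] exI[of _ "max r1 r2"]) auto
qed

lemma rifs_uniform_exists:
  assumes "rifs K N J S"
  shows "\<exists>c r. rifs_uniform K N J S c r"
proof -
  have "finite (Sigma {1..N} J)" "\<And>ij. ij \<in> Sigma {1..N} J \<Longrightarrow> bilip_contraction K (case_prod S ij)"
    using assms unfolding rifs_def by auto
  then have "\<exists>c r. 0 < c \<and> 0 \<le> r \<and> r < 1 \<and> (\<forall>ij\<in>Sigma {1..N} J. \<forall>x\<in>K. \<forall>y\<in>K.
      c * dist x y \<le> dist (case_prod S ij x) (case_prod S ij y) \<and>
      dist (case_prod S ij x) (case_prod S ij y) \<le> r * dist x y)"
    by (rule bilip_contraction_uniform_constants)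
  then obtain c r where cr: "0 < c" "0 \<le> r" "r < 1" "\<forall>ij\<in>Sigma {1..N} J. \<forall>x\<in>K. \<forall>y\<in>K.
      c * dist x y \<le> dist (case_prod S ij x) (case_prod S ij y) \<and>
      dist (case_prod S ij x) (case_prod S ij y) \<le> r * dist x y"
    by blast
  have "rifs_uniform K N J S c r"
    using assms cr unfolding rifs_uniform_def by fastforce
  then show ?thesis by blast
qed

theorem lemma3p2:
  fixes K :: "'a::metric_space set" and N :: nat and J :: "nat \<Rightarrow> nat set"
    and S :: "nat \<Rightarrow> nat \<Rightarrow> 'a \<Rightarrow> 'a" and w :: "nat \<Rightarrow> nat"
  assumes "rifs K N J S"
    and "\<forall>n. w n \<in> {1..N}"
  shows "packing_dim (rattractor K J S w) = upper_box_dim (rattractor K J S w)"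
proof -
  obtain c r where "rifs_uniform K N J S c r" using rifs_uniform_exists[OF assms(1)] by blast
  then interpret rifs_uniform K N J S c r .
  have w: "admissible w" unfolding admissible_def by (rule assms(2))
  show ?thesis
  proof (rule packing_dim_eq_upper_box_dimI)
    show "compact (F w)" "F w \<noteq> {}" using compact_attractor[OF w] attractor_nonempty[OF w] .
    show "upper_box_dim (F w) \<le> ereal s" if "packing_measure s (F w) = 0" for s
      using upper_box_dim_attractor_le_if_packing_measure_zero[OF w that] .
  qed
qed

end
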